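(* Let $\mathcal E\subset\mathcal V$ be finite, let $\mathcal R_0=\mathcal E\cup-\mathcal S(L)$, $\mathcal R_{i+1}=\{v\in\mathcal V:\pi(\Psi(v))\cap\mathcal R_i\neq\emptyset\}$ for $i\geq0$, and $\mathcal R=\bigcup_{i\ge0}\mathcal R_i$. Let $H\in\mathbb Z_{\geq0}$ be such that $d\ell^H\mathcal E\subset\mathbb Z$ and let $N\in\mathbb Q_{\geq0}$ be such that $\mathcal E\cup-\mathcal S(L)\subset\mathbb Q_{\leq N}$. Put $c=\left\lfloor(n+1)\frac{N+\mu_\kappa}{\tau}\right\rfloor+H$. Then $\mathcal R_i=\mathcal R$ for every integer $i\geq c$.
   Context: Let $\mathbf K$ be a field and $\ell\geq 2$ an integer. Let $L=a_n\phi_\ell^n+\dots+a_0$ with $n\geq1$, $a_i\in\mathbf K[z]$, $a_0a_n\neq0$, where $\phi_\ell(f)(z)=f(z^\ell)$ acting on Hahn series with coefficients in $\mathbf K$ and value group $\mathbb Q$. Let $\mathcal P(L)=\{(\ell^i,j): 0\le i\le n,\ j\in\operatorname{supp} a_i\}$. The Newton polygon of $L$ is the convex hull of $\{(\ell^i,j): 0\le i\le n,\ j\geq\operatorname{val} a_i\}\subset\mathbb R^2$; its non-vertical edges have slopes $\mu_1<\dots<\mu_\kappa$, $\mathcal S(L)=\{\mu_1,\dots,\mu_\kappa\}$. Let $d\geq1$ be a common multiple of the denominators of the $\mu_k$. Define $\Psi(v)=\{v\ell^i+j:(\ell^i,j)\in\mathcal P(L)\}$, $\pi(q)=\max\{(q-j)/\ell^i:(\ell^i,j)\in\mathcal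 P(L)\}$. Let $\mathcal V_0=-\mathcal S(L)$, $\mathcal V_{i+1}=\bigcup_{v\in\mathcal V_i}\pi(\Psi(v))$, $\mathcal V=\bigcup_{i\ge0}\mathcal V_i$ (a well-ordered subset of $\bigcup_{i\ge0}\frac1{d\ell^i}\mathbb Z$). For $v\in\mathbb Q$ let $\epsilon(v)=\min\{w\in\mathcal V: w>v\}-v\in\mathbb Q_{>0}\cup\{+\infty\}$ ($+\infty$ if this set is empty), and $\tau=\min\{\epsilon(-\mu_1),\dots,\epsilon(-\mu_\kappa),(d\ell^n)^{-1}\}\in\mathbb Q_{>0}$. *)

theory Defs
  imports "HOL-Analysis.Analysis" "HOL-Computational_Algebra.Polynomial"
begin

text \<open>The operator L = a_n phi^n + ... + a_0 is represented by its coefficient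
  polynomials a 0, ..., a n (a i for i > n is irrelevant), together with n and l.\<close>

definition val :: "'a::zero poly \<Rightarrow> nat" where
  "val p = (LEAST j. coeff p j \<noteq> 0)"

definition PL :: "(nat \<Rightarrow> 'a::zero poly) \<Rightarrow> nat \<Rightarrow> nat \<Rightarrow> (nat \<times> nat) set" where
  "PL a n l = {(l ^ i, j) | i j. i \<le> n \<and> coeff (a i) j \<noteq> 0}"

definition newton_polygon :: "(nat \<Rightarrow> 'a::zero poly) \<Rightarrow> nat \<Rightarrow> nat \<Rightarrow> (real \<times> real) set" where
  "newton_polygon a n l =
     convex hull {(real (l ^ i), y) | i y. i \<le> n \<and> a i \<noteq> 0 \<and> y \<ge> real (val (a i))}"

definition slopes :: "(nat \<Rightarrow> 'a::zero poly) \<Rightarrow> nat \<Rightarrow> nat \<Rightarrow> real set" where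
  "slopes a n l = {\<mu>. \<exists>F p q. F face_of newton_polygon a n l \<and> aff_dim F = 1 \<and>
       p \<in> F \<and> q \<in> F \<and> fst p \<noteq> fst q \<and> \<mu> = (snd q - snd p) / (fst q - fst p)}"

definition Psi :: "(nat \<Rightarrow> 'a::zero poly) \<Rightarrow> nat \<Rightarrow> nat \<Rightarrow> real \<Rightarrow> real set" where
  "Psi a n l v = (\<lambda>(x, j). v * real x + real j) ` PL a n l"

definition piL :: "(nat \<Rightarrow> 'a::zero poly) \<Rightarrow> nat \<Rightarrow> nat \<Rightarrow> real \<Rightarrow> real" where
  "piL a n l q = Max ((\<lambda>(x, j). (q - real j) / real x) ` PL a n l)"

primrec Vseq :: "(nat \<Rightarrow> 'a::zero poly) \<Rightarrow> nat \<Rightarrow> nat \<Rightarrow> nat \<Rightarrow> real set" where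
  "Vseq a n l 0 = uminus ` slopes a n l"
| "Vseq a n l (Suc i) = (\<Union>v\<in>Vseq a n l i. piL a n l ` Psi a n l v)"

definition Vset :: "(nat \<Rightarrow> 'a::zero poly) \<Rightarrow> nat \<Rightarrow> nat \<Rightarrow> real set" where
  "Vset a n l = (\<Union>i. Vseq a n l i)"

definition eps :: "(nat \<Rightarrow> 'a::zero poly) \<Rightarrow> nat \<Rightarrow> nat \<Rightarrow> real \<Rightarrow> ereal" where
  "eps a n l v = (if \<exists>w\<in>Vset a n l. w > v
      then ereal ((LEAST w. w \<in> Vset a n l \<and> w > v) - v) else \<infinity>)"

definition tau :: "(nat \<Rightarrow> 'a::zero poly) \<Rightarrow> nat \<Rightarrow> nat \<Rightarrow> nat \<Rightarrow> real" where
  "tau a n l d = real_of_ereal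
     (Min ({ereal (1 / (real d * real l ^ n))} \<union> (\<lambda>\<mu>. eps a n l (- \<mu>)) ` slopes a n l))"

primrec Rseq :: "(nat \<Rightarrow> 'a::zero poly) \<Rightarrow> nat \<Rightarrow> nat \<Rightarrow> real set \<Rightarrow> nat \<Rightarrow> real set" where
  "Rseq a n l E 0 = E \<union> uminus ` slopes a n l"
| "Rseq a n l E (Suc i) = {v \<in> Vset a n l. piL a n l ` Psi a n l v \<inter> Rseq a n l E i \<noteq> {}}"

end

theory Submission
  imports Defs "HOL-Library.Sublist"
begin

text \<open>An element \<open>v\<close> entering \<open>\<R>\<^bsub>k+1\<^esub> - \<R>\<^sub>k\<close> has a parent \<open>w = \<pi>(\<psi>)\<close>, \<open>\<psi> \<in> \<Psi>(v)\<close>,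
  entering at stage \<open>k\<close>, with \<open>v < w\<close>. Let the height \<open>h(v)\<close> be the least \<open>h\<close> with
  \<open>d \<ell>\<^sup>h v \<in> \<int>\<close>. The potential \<open>(n + 1) v / \<tau> + h(v)\<close> grows by at least one from \<open>v\<close> to \<open>w\<close>:
  if \<open>w - v \<ge> \<tau>\<close> the first term gains \<open>n + 1\<close> while \<open>h(v) \<le> h(w) + n\<close>; if \<open>w - v < \<tau>\<close>,
  looking at the rightmost point of \<open>\<P>(L)\<close> where the minimum of \<open>\<Psi>(w)\<close> is attained and at the
  edge of the Newton polygon leaving it to the right, the choice of \<open>\<tau>\<close> (below \<open>1 / (d \<ell>\<^sup>n)\<close>
  and below the gaps of \<open>\<V>\<close> just above the points \<open>-\<mu>\<^sub>k\<close>) forces \<open>h(v) < h(w)\<close>.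
  Since the potential is at most \<open>(n + 1) N / \<tau> + H\<close> on \<open>\<R>\<^sub>0\<close> and at least
  \<open>-(n + 1) \<mu>\<^sub>\<kappa> / \<tau>\<close> on \<open>\<V>\<close>, this bounds \<open>k\<close>. That \<open>\<tau> > 0\<close> rests on \<open>\<V>\<close> being well
  ordered, which follows from Higman's lemma: \<open>\<V>\<close> is the closure of the finite set
  \<open>-\<S>(L)\<close> under finitely many monotone inflationary maps.\<close>

section \<open>Higman's lemma\<close>

definition bad_seqs :: "'a set \<Rightarrow> (nat \<Rightarrow> 'a list) set" where
  "bad_seqs A = {f. (\<forall>i. set (f i) \<subseteq> A) \<and> (\<forall>i j. i < j \<longrightarrow> \<not> subseq (f i) (f j))}"

definition bad_continuations :: "'a set \<Rightarrow> 'a list list \<Rightarrow> 'a list set" where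
  "bad_continuations A ps = {g (length ps) | g. g \<in> bad_seqs A \<and> (\<forall>k<length ps. g k = ps ! k)}"

primrec min_bad_prefix :: "'a set \<Rightarrow> nat \<Rightarrow> 'a list list" where
  "min_bad_prefix A 0 = []"
| "min_bad_prefix A (Suc k) =
     min_bad_prefix A k @ [ARG_MIN length w. w \<in> bad_continuations A (min_bad_prefix A k)]"

definition min_bad_seq :: "'a set \<Rightarrow> nat \<Rightarrow> 'a list" where
  "min_bad_seq A k = (ARG_MIN length w. w \<in> bad_continuations A (min_bad_prefix A k))"

lemma length_min_bad_prefix [simp]: "length (min_bad_prefix A k) = k"
  by (induction k) auto

lemma nth_min_bad_prefix: "k < m \<Longrightarrow> min_bad_prefix A m ! k = min_bad_seq A k"
  by (induction m) (auto simp: nth_append min_bad_seq_def less_Suc_eq)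

lemma bad_continuation_iff:
  "w \<in> bad_continuations A (min_bad_prefix A m) \<longleftrightarrow>
     (\<exists>g\<in>bad_seqs A. (\<forall>k<m. g k = min_bad_seq A k) \<and> g m = w)"
  unfolding bad_continuations_def by (auto simp: nth_min_bad_prefix)

lemma min_bad_seq_continuable:
  assumes "bad_seqs A \<noteq> {}"
  shows "\<exists>g\<in>bad_seqs A. \<forall>k<m. g k = min_bad_seq A k"
proof (induction m)
  case 0
  show ?case using assms by auto
next
  case (Suc m)
  then obtain g where "g \<in> bad_seqs A" "\<forall>k<m. g k = min_bad_seq A k"
    by blast
  then have "g m \<in> bad_continuations A (min_bad_prefix A m)"
    by (auto simp: bad_continuation_iff)
  then have "min_bad_seq A m \<in> bad_continuations A (min_bad_prefix A m)"
    unfolding min_bad_seq_def by (rule arg_min_natI)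
  then show ?case
    by (auto simp: bad_continuation_iff less_Suc_eq)
qed

lemma min_bad_seq_bad:
  assumes "bad_seqs A \<noteq> {}"
  shows "min_bad_seq A \<in> bad_seqs A"
proof -
  have "set (min_bad_seq A j) \<subseteq> A \<and> (\<forall>i<j. \<not> subseq (min_bad_seq A i) (min_bad_seq A j))" for j
  proof -
    obtain g where g: "g \<in> bad_seqs A" "\<forall>k<Suc j. g k = min_bad_seq A k"
      using min_bad_seq_continuable[OF assms] by blast
    then have "\<forall>i\<le>j. min_bad_seq A i = g i" by simp
    with g(1) show ?thesis unfolding bad_seqs_def by simp
  qed
  then show ?thesis unfolding bad_seqs_def by blast
qed

lemma min_bad_seq_minimal:
  assumes "g \<in> bad_seqs A" "\<forall>k<m. g k = min_bad_seq A k"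
  shows "length (min_bad_seq A m) \<le> length (g m)"
  unfolding min_bad_seq_def using assms by (intro arg_min_nat_le) (auto simp: bad_continuation_iff)

lemma bad_seq_drop_heads:
  fixes f :: "nat \<Rightarrow> 'a list" and \<phi> :: "nat \<Rightarrow> nat"
  assumes f: "f \<in> bad_seqs A" and \<phi>: "strict_mono \<phi>" and heads: "\<And>k. f (\<phi> k) = c # t k"
  shows "(\<lambda>k. if k < \<phi> 0 then f k else t (k - \<phi> 0)) \<in> bad_seqs A"
    (is "?g \<in> _")
proof -
  have f_bad: "\<not> subseq (f i) (f j)" if "i < j" for i j
    using f that unfolding bad_seqs_def by blast
  have g_bad: "\<not> subseq (?g i) (?g j)" if "i < j" for i j
  proof (cases "j < \<phi> 0")
    case True
    then show ?thesis using f_bad that by simp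
  next
    case False
    show ?thesis
    proof (cases "i < \<phi> 0")
      case True
      have "i < \<phi> (j - \<phi> 0)"
        using strict_mono_less_eq[OF \<phi>, of 0 "j - \<phi> 0"] True by simp
      then have "\<not> subseq (f i) (c # t (j - \<phi> 0))"
        using f_bad heads by metis
      then show ?thesis using True False by auto
    next
      case i_ge: False
      have "\<phi> (i - \<phi> 0) < \<phi> (j - \<phi> 0)"
        using \<phi> \<open>i < j\<close> i_ge by (simp add: strict_mono_less)
      then have "\<not> subseq (c # t (i - \<phi> 0)) (c # t (j - \<phi> 0))"
        using f_bad heads by metis
      then show ?thesis using i_ge False by simp
    qed
  qed
  have g_set: "set (?g i) \<subseteq> A" for i
  proof -
    have "set (t k) \<subseteq> set (f (\<phi> k))" for k
      by (simp add: heads subset_insertI)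
    then show ?thesis
      using f unfolding bad_seqs_def by (auto intro: subset_trans)
  qed
  show ?thesis
    unfolding bad_seqs_def mem_Collect_eq by (intro conjI allI impI g_set g_bad)
qed

lemma finite_range_constant_subseq:
  fixes h :: "nat \<Rightarrow> 'b"
  assumes "finite (range h)"
  obtains \<phi> :: "nat \<Rightarrow> nat" and c where "strict_mono \<phi>" "\<And>k. h (\<phi> k) = c"
proof -
  obtain i0 where "infinite {i \<in> UNIV. h i = h i0}"
    using pigeonhole_infinite[of "UNIV :: nat set" h] assms by auto
  then obtain \<phi> :: "nat \<Rightarrow> nat" where "strict_mono \<phi>" "\<forall>k. \<phi> k \<in> {i \<in> UNIV. h i = h i0}"
    using infinite_enumerate by blast
  then show ?thesis using that by blast
qed

lemma higman:
  fixes f :: "nat \<Rightarrow> 'a list"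
  assumes "finite A" and "\<And>i. set (f i) \<subseteq> A"
  shows "\<exists>i j. i < j \<and> subseq (f i) (f j)"
proof (rule ccontr)
  assume "\<not> ?thesis"
  then have "f \<in> bad_seqs A" using assms(2) unfolding bad_seqs_def by auto
  then have "bad_seqs A \<noteq> {}" by blast
  define m where "m = min_bad_seq A"
  have m_bad: "m \<in> bad_seqs A"
    unfolding m_def using \<open>bad_seqs A \<noteq> {}\<close> by (rule min_bad_seq_bad)
  have m_ne: "m i \<noteq> []" for i
  proof
    assume "m i = []"
    then have "subseq (m i) (m (Suc i))" by simp
    then show False using m_bad unfolding bad_seqs_def by blast
  qed
  have "hd (m i) \<in> A" for i
    using m_ne[of i] m_bad hd_in_set unfolding bad_seqs_def by blast
  then have fin: "finite (range (\<lambda>i. hd (m i)))"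
    by (intro finite_subset[OF _ assms(1)]) auto
  obtain \<phi> :: "nat \<Rightarrow> nat" and c where \<phi>: "strict_mono \<phi>" "\<And>k. hd (m (\<phi> k)) = c"
    using finite_range_constant_subseq[OF fin] by blast
  have heads: "m (\<phi> k) = c # tl (m (\<phi> k))" for k
    using m_ne[of "\<phi> k"] \<phi>(2)[of k] by (cases "m (\<phi> k)") auto
  define g where "g k = (if k < \<phi> 0 then m k else tl (m (\<phi> (k - \<phi> 0))))" for k
  have "g \<in> bad_seqs A"
    unfolding g_def by (rule bad_seq_drop_heads[OF m_bad \<phi>(1) heads])
  moreover have "\<forall>k<\<phi> 0. g k = min_bad_seq A k"
    by (simp add: g_def m_def)
  ultimately have "length (m (\<phi> 0)) \<le> length (g (\<phi> 0))"
    unfolding m_def by (rule min_bad_seq_minimal)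
  moreover have "g (\<phi> 0) = tl (m (\<phi> 0))"
    by (simp add: g_def)
  ultimately show False
    using m_ne[of "\<phi> 0"] by (cases "m (\<phi> 0)") auto
qed

section \<open>Closures under monotone inflationary maps are well ordered\<close>

definition foldr_closure :: "('p \<Rightarrow> real \<Rightarrow> real) \<Rightarrow> 'p set \<Rightarrow> real set \<Rightarrow> real set" where
  "foldr_closure G A B = {foldr G ws s | ws s. set ws \<subseteq> A \<and> s \<in> B}"

lemma foldr_inflationary:
  fixes G :: "'p \<Rightarrow> real \<Rightarrow> real"
  assumes "\<forall>p\<in>A. \<forall>y. y \<le> G p y" "set ys \<subseteq> A"
  shows "s \<le> foldr G ys s"
  using assms(2)
proof (induction ys)
  case (Cons y ys)
  then have "s \<le> foldr G ys s" by simp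
  also have "\<dots> \<le> G y (foldr G ys s)" using assms(1) Cons.prems by simp
  finally show ?case by simp
qed simp

lemma foldr_mono_subseq:
  fixes G :: "'p \<Rightarrow> real \<Rightarrow> real"
  assumes "subseq xs ys" "set ys \<subseteq> A"
    and mono: "\<forall>p\<in>A. mono (G p)" and infl: "\<forall>p\<in>A. \<forall>y. y \<le> G p y"
  shows "foldr G xs s \<le> foldr G ys s"
  using assms(1,2)
proof (induction rule: list_emb.induct)
  case (list_emb_Nil ys)
  then show ?case using foldr_inflationary[OF infl] by simp
next
  case (list_emb_Cons xs ys y)
  then have "foldr G xs s \<le> foldr G ys s" by simp
  also have "\<dots> \<le> G y (foldr G ys s)" using infl list_emb_Cons.prems by simp
  finally show ?case by simp
next
  case (list_emb_Cons2 x y xs ys)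
  then have "foldr G xs s \<le> foldr G ys s" by simp
  then show ?case
    using mono list_emb_Cons2 by (simp add: monoD)
qed

lemma foldr_closure_no_decreasing_seq:
  assumes "finite A" "finite B" "\<forall>p\<in>A. mono (G p)" "\<forall>p\<in>A. \<forall>y. y \<le> G p y"
    and "\<forall>i. f i \<in> foldr_closure G A B"
  shows "\<not> (\<forall>i. f (Suc i) < f i)"
proof
  assume "\<forall>i. f (Suc i) < f i"
  then have f_dec: "strict_mono (\<lambda>i. - f i)"
    by (simp add: strict_mono_Suc_iff)
  have "\<forall>i. \<exists>ws s. f i = foldr G ws s \<and> set ws \<subseteq> A \<and> s \<in> B"
    using assms(5) unfolding foldr_closure_def by blast
  then obtain ws s where ws: "\<And>i. f i = foldr G (ws i) (s i)" "\<And>i. set (ws i) \<subseteq> A" "\<And>i. s i \<in> B"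
    by metis
  have fin: "finite (range s)"
    by (intro finite_subset[OF _ assms(2)]) (auto simp: ws(3))
  obtain \<phi> :: "nat \<Rightarrow> nat" and c where \<phi>: "strict_mono \<phi>" "\<And>k. s (\<phi> k) = c"
    using finite_range_constant_subseq[OF fin] by blast
  obtain k k' where "k < k'" "subseq (ws (\<phi> k)) (ws (\<phi> k'))"
    using higman[OF assms(1), of "\<lambda>k. ws (\<phi> k)"] ws(2) by blast
  then have "f (\<phi> k) \<le> f (\<phi> k')"
    using foldr_mono_subseq[OF _ ws(2) assms(3,4)] \<phi>(2) by (simp add: ws(1))
  moreover have "f (\<phi> k') < f (\<phi> k)"
    using strict_monoD[OF f_dec strict_monoD[OF \<phi>(1) \<open>k < k'\<close>]] by simp
  ultimately show False by simp
qed

lemma foldr_closure_has_least: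
  assumes "finite A" "finite B" "\<forall>p\<in>A. mono (G p)" "\<forall>p\<in>A. \<forall>y. y \<le> G p y"
    and "W \<subseteq> foldr_closure G A B" "W \<noteq> {}"
  shows "\<exists>w\<in>W. \<forall>w'\<in>W. w \<le> w'"
proof -
  let ?less = "{(y, z). y \<in> W \<and> z \<in> W \<and> y < z}"
  have "wf ?less"
    unfolding wf_iff_no_infinite_down_chain
    using foldr_closure_no_decreasing_seq[OF assms(1-4)] assms(5) by blast
  moreover obtain w0 where "w0 \<in> W"
    using assms(6) by blast
  ultimately obtain w where w: "w \<in> W" "\<And>w'. (w', w) \<in> ?less \<Longrightarrow> w' \<notin> W"
    by (rule wfE_min) blast
  have "w \<le> w'" if "w' \<in> W" for w'
    using w(2)[of w'] w(1) that by force
  then show ?thesis using w(1) by blast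
qed

section \<open>Supporting lines of vertically closed planar hulls\<close>

lemma collinear_slope_eq:
  fixes F :: "(real \<times> real) set"
  assumes "collinear F" "p \<in> F" "q \<in> F" "fst p \<noteq> fst q" "r \<in> F"
  shows "snd r - snd p = (snd q - snd p) / (fst q - fst p) * (fst r - fst p)"
proof -
  obtain u where u: "\<forall>x\<in>F. \<forall>y\<in>F. \<exists>c. x - y = c *\<^sub>R u"
    using assms(1) unfolding collinear_def by blast
  obtain c1 c2 where c: "q - p = c1 *\<^sub>R u" "r - p = c2 *\<^sub>R u"
    using u assms(2,3,5) by meson
  have "fst q - fst p = c1 * fst u" "snd q - snd p = c1 * snd u"
    using arg_cong[OF c(1), of fst] arg_cong[OF c(1), of snd] by auto
  moreover have "fst r - fst p = c2 * fst u" "snd r - snd p = c2 * snd u"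
    using arg_cong[OF c(2), of fst] arg_cong[OF c(2), of snd] by auto
  moreover have "c1 \<noteq> 0" "fst u \<noteq> 0"
    using calculation(1) assms(4) by auto
  ultimately show ?thesis by (simp add: field_simps)
qed

lemma convex_hull_vertically_closed:
  fixes G :: "(real \<times> real) set"
  assumes up: "\<And>z t. z \<in> G \<Longrightarrow> 0 \<le> t \<Longrightarrow> z + (0, t) \<in> G"
    and "z \<in> convex hull G" "0 \<le> t"
  shows "z + (0, t) \<in> convex hull G"
proof -
  have "(\<lambda>x. (0, t) + x) ` G \<subseteq> G"
    using up assms(3) by (auto simp: add.commute)
  then have "convex hull ((\<lambda>x. (0, t) + x) ` G) \<subseteq> convex hull G"
    by (rule hull_mono)
  moreover have "(0, t) + z \<in> convex hull ((\<lambda>x. (0, t) + x) ` G)"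
    unfolding convex_hull_translation using assms(2) by blast
  ultimately have "(0, t) + z \<in> convex hull G"
    by blast
  then show ?thesis by (simp add: add.commute)
qed

lemma extension_through_midpoint_above_segment:
  fixes p q k :: "real \<times> real"
  defines "z \<equiv> (1/2) *\<^sub>R p + (1/2) *\<^sub>R q"
  assumes "fst p < fst q"
    and below: "snd k - snd p < (snd q - snd p) / (fst q - fst p) * (fst k - fst p)"
  obtains t r where "0 < t" "r \<in> closed_segment p q"
    "fst r = fst (z + t *\<^sub>R (z - k))" "snd r < snd (z + t *\<^sub>R (z - k))"
proof -
  define \<mu> where "\<mu> = (snd q - snd p) / (fst q - fst p)"
  define dx where "dx = fst q - fst p"
  have dx: "dx > 0" "snd q - snd p = \<mu> * dx"
    using assms(2) by (auto simp: \<mu>_def dx_def)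
  define c where "c = \<bar>fst z - fst k\<bar>"
  define t where "t = dx / (2 * (c + 1))"
  define s where "s = t * (fst z - fst k) / dx"
  define r where "r = (1/2 - s) *\<^sub>R p + (1/2 + s) *\<^sub>R q"
  have "c \<ge> 0" by (simp add: c_def)
  then have "t * (c + 1) = dx / 2" "t > 0"
    using dx(1) by (simp_all add: t_def field_simps)
  then have t: "t > 0" "t * c \<le> dx / 2"
    by (simp_all add: algebra_simps)
  then have "\<bar>s\<bar> \<le> 1/2"
    using dx(1) by (simp add: s_def c_def abs_mult abs_divide divide_le_eq)
  then have "r \<in> closed_segment p q"
    unfolding r_def in_segment by (intro exI[of _ "1/2 + s"]) (auto simp: algebra_simps)
  have "fst r = fst z + s * dx" "snd r = snd z + s * (snd q - snd p)"
    by (simp_all add: r_def z_def dx_def algebra_simps)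
  then have r: "fst r = fst z + s * dx" "snd r = snd z + \<mu> * (s * dx)"
    using dx(2) by simp_all
  have z: "snd z = snd p + \<mu> * (fst z - fst p)"
    using dx(2) by (simp add: z_def dx_def field_simps)
  have sdx: "s * dx = t * (fst z - fst k)"
    using dx(1) by (simp add: s_def)
  have "snd (z + t *\<^sub>R (z - k)) - snd r = t * (snd z - snd k) - \<mu> * (t * (fst z - fst k))"
    using r(2) sdx by simp
  also have "\<dots> = t * (\<mu> * (fst k - fst p) - (snd k - snd p))"
    unfolding z by (simp add: algebra_simps)
  finally have "snd (z + t *\<^sub>R (z - k)) - snd r = t * (\<mu> * (fst k - fst p) - (snd k - snd p))" .
  moreover have "0 < t * (\<mu> * (fst k - fst p) - (snd k - snd p))"
    using t(1) below unfolding \<mu>_def by simp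
  ultimately have "snd r < snd (z + t *\<^sub>R (z - k))"
    by simp
  moreover have "fst r = fst (z + t *\<^sub>R (z - k))"
    using r(1) sdx by simp
  ultimately show ?thesis
    using that t(1) \<open>r \<in> closed_segment p q\<close> by blast
qed

lemma face_of_vertically_closed_hull_supporting:
  fixes G :: "(real \<times> real) set"
  assumes up: "\<And>z t. z \<in> G \<Longrightarrow> 0 \<le> t \<Longrightarrow> z + (0, t) \<in> G"
    and F: "F face_of convex hull G" "collinear F" "p \<in> F" "q \<in> F" "fst p < fst q"
    and k: "k \<in> convex hull G"
  shows "(snd q - snd p) / (fst q - fst p) * (fst k - fst p) \<le> snd k - snd p"
proof (rule ccontr)
  define \<mu> where "\<mu> = (snd q - snd p) / (fst q - fst p)"
  define z where "z = (1/2) *\<^sub>R p + (1/2) *\<^sub>R q"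
  have on_line: "snd x - snd p = \<mu> * (fst x - fst p)" if "x \<in> F" for x
    using collinear_slope_eq[OF F(2,3,4) _ that] F(5) unfolding \<mu>_def by simp
  assume "\<not> ?thesis"
  then have below: "snd k - snd p < \<mu> * (fst k - fst p)"
    unfolding \<mu>_def by simp
  then obtain t r where t: "0 < t" "r \<in> closed_segment p q"
    and w: "fst r = fst (z + t *\<^sub>R (z - k))" "snd r < snd (z + t *\<^sub>R (z - k))"
    using extension_through_midpoint_above_segment[OF F(5)] unfolding \<mu>_def z_def by blast
  define w where "w = z + t *\<^sub>R (z - k)"
  have "convex F"
    using face_of_imp_convex[OF F(1)] .
  then have "r \<in> F"
    using closed_segment_subset[OF F(3,4)] t(2) by blast
  moreover have "w = r + (0, snd w - snd r)"
    using w(1) by (simp add: w_def prod_eq_iff)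
  ultimately have "w \<in> convex hull G"
    using convex_hull_vertically_closed[OF up, of r "snd w - snd r"] face_of_imp_subset[OF F(1)] w(2)
    unfolding w_def by auto
  moreover have "k \<noteq> w"
  proof
    assume "k = w"
    then have "fst k = fst r" "snd r < snd k"
      using w by (simp_all add: w_def)
    then show False
      using on_line[OF \<open>r \<in> F\<close>] below by simp
  qed
  moreover define u where "u = 1 / (1 + t)"
  have "u * (1 + t) = 1" "0 < u" "u < 1"
    using t(1) by (simp_all add: u_def)
  then have "z = (1 - u) *\<^sub>R k + u *\<^sub>R w"
    by (simp add: w_def algebra_simps flip: scaleR_add_left)
  ultimately have "z \<in> open_segment k w"
    unfolding in_segment using \<open>0 < u\<close> \<open>u < 1\<close> by blast
  moreover have "z \<in> F"
    unfolding z_def using F(3,4) \<open>convex F\<close> by (intro convexD) auto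
  ultimately have "k \<in> F"
    using face_ofD[OF F(1)] k \<open>w \<in> convex hull G\<close> by blast
  then show False
    using on_line below by fastforce
qed

lemma convex_hull_Int_supporting_hyperplane:
  fixes G :: "'a::real_inner set"
  assumes "p \<in> convex hull G" "\<forall>z\<in>G. b \<le> c \<bullet> z" "c \<bullet> p = b"
  shows "p \<in> convex hull (G \<inter> {z. c \<bullet> z = b})"
proof -
  obtain S u where S: "finite S" "S \<subseteq> G" "\<forall>x\<in>S. 0 \<le> u x" "sum u S = 1"
    "(\<Sum>v\<in>S. u v *\<^sub>R v) = p"
    using assms(1) unfolding convex_hull_explicit by blast
  have "(\<Sum>v\<in>S. u v * (c \<bullet> v - b)) = c \<bullet> (\<Sum>v\<in>S. u v *\<^sub>R v) - b * sum u S"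
    by (simp add: inner_sum_right right_diff_distrib sum_subtractf sum_distrib_left mult.commute)
  also have "\<dots> = 0"
    using S(4,5) assms(3) by simp
  finally have "\<forall>v\<in>S. u v * (c \<bullet> v - b) = 0"
    using S(1-3) assms(2) by (subst sum_nonneg_eq_0_iff[symmetric]) auto
  then have u0: "u v = 0" if "v \<in> S - {z. c \<bullet> z = b}" for v
    using that by auto
  let ?T = "S \<inter> {z. c \<bullet> z = b}"
  have "sum u ?T = sum u S" "(\<Sum>v\<in>?T. u v *\<^sub>R v) = (\<Sum>v\<in>S. u v *\<^sub>R v)"
    using S(1) u0 by (intro sum.mono_neutral_left; auto)+
  then have "sum u ?T = 1" "(\<Sum>v\<in>?T. u v *\<^sub>R v) = p"
    using S(4,5) by simp_all
  then show ?thesis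
    unfolding convex_hull_explicit using S(1-3) by (intro CollectI exI[of _ ?T] exI[of _ u]) auto
qed

lemma convex_hull_point_on_supporting_line:
  fixes G :: "(real \<times> real) set"
  assumes "p \<in> convex hull G" "\<forall>z\<in>G. \<mu> * (fst z - fst p) \<le> snd z - snd p"
  shows "\<exists>g\<in>G. snd g - snd p = \<mu> * (fst g - fst p) \<and> fst g \<le> fst p"
    and "\<exists>g\<in>G. snd g - snd p = \<mu> * (fst g - fst p) \<and> fst p \<le> fst g"
proof -
  let ?c = "(- \<mu>, 1)" and ?b = "snd p - \<mu> * fst p"
  let ?L = "G \<inter> {z. ?c \<bullet> z = ?b}"
  have "p \<in> convex hull ?L"
    using assms by (intro convex_hull_Int_supporting_hyperplane) (auto simp: inner_prod_def algebra_simps)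
  moreover have line: "snd g - snd p = \<mu> * (fst g - fst p)" if "g \<in> ?L" for g
    using that by (auto simp: inner_prod_def algebra_simps)
  moreover have "p \<notin> convex hull (G \<inter> {z. ?c \<bullet> z = ?b} \<inter> {z. d \<bullet> z < d \<bullet> p})" for d :: "real \<times> real"
  proof
    assume "p \<in> convex hull (?L \<inter> {z. d \<bullet> z < d \<bullet> p})"
    also have "\<dots> \<subseteq> {z. d \<bullet> z < d \<bullet> p}"
      by (intro hull_minimal convex_halfspace_lt) auto
    finally show False by simp
  qed
  ultimately have not_below: "\<not> ?L \<subseteq> {z. d \<bullet> z < d \<bullet> p}" for d
    by (metis inf.absorb1)
  from not_below[of "(-1, 0)"] obtain g where "g \<in> ?L" "fst g \<le> fst p"
    unfolding subset_iff by (force simp: inner_prod_def)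
  with line show "\<exists>g\<in>G. snd g - snd p = \<mu> * (fst g - fst p) \<and> fst g \<le> fst p"
    by blast
  from not_below[of "(1, 0)"] obtain g' where "g' \<in> ?L" "fst p \<le> fst g'"
    unfolding subset_iff by (force simp: inner_prod_def)
  with line show "\<exists>g\<in>G. snd g - snd p = \<mu> * (fst g - fst p) \<and> fst p \<le> fst g"
    by blast
qed

section \<open>The operator, its Newton polygon and the set \<open>\<V>\<close>\<close>

lemma coeff_val_nonzero: "p \<noteq> 0 \<Longrightarrow> coeff p (val p) \<noteq> 0"
  unfolding val_def by (rule LeastI[of _ "degree p"]) simp

lemma val_le: "coeff p j \<noteq> 0 \<Longrightarrow> val p \<le> j"
  unfolding val_def by (rule Least_le)

locale mahler_operator =
  fixes a :: "nat \<Rightarrow> 'a::field poly" and n l :: nat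
  assumes l_ge_2: "2 \<le> l" and a0_nonzero: "a 0 \<noteq> 0"
begin

abbreviation P where "P \<equiv> PL a n l"
abbreviation \<Psi> where "\<Psi> \<equiv> Psi a n l"
abbreviation \<pi> where "\<pi> \<equiv> piL a n l"
abbreviation S where "S \<equiv> slopes a n l"

lemma PL_memD: "(x, j) \<in> P \<Longrightarrow> \<exists>i\<le>n. x = l ^ i \<and> coeff (a i) j \<noteq> 0"
  unfolding PL_def by auto

lemma finite_PL: "finite P"
proof -
  define D where "D = Max ((\<lambda>i. degree (a i)) ` {..n})"
  have "P \<subseteq> (\<lambda>(i, j). (l ^ i, j)) ` ({..n} \<times> {..D})"
  proof
    fix z assume "z \<in> P"
    then obtain i j where z: "z = (l ^ i, j)" "i \<le> n" "coeff (a i) j \<noteq> 0"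
      unfolding PL_def by auto
    then have "j \<le> degree (a i)" by (simp add: le_degree)
    also have "degree (a i) \<le> D" unfolding D_def using z(2) by (intro Max_ge) auto
    finally show "z \<in> (\<lambda>(i, j). (l ^ i, j)) ` ({..n} \<times> {..D})" using z by force
  qed
  then show ?thesis by (rule finite_subset) auto
qed

lemma val_a0_in_PL: "(1, val (a 0)) \<in> P"
  unfolding PL_def using coeff_val_nonzero[OF a0_nonzero] by force

lemma PL_abscissa_bounds:
  assumes "(x, j) \<in> P"
  shows "1 \<le> real x" "x \<le> l ^ n"
  using PL_memD[OF assms] l_ge_2 by (auto simp: power_increasing)

lemma Psi_memI: "(x, j) \<in> P \<Longrightarrow> v * real x + real j \<in> \<Psi> v"
  unfolding Psi_def by force

lemma Psi_memE:
  assumes "q \<in> \<Psi> v"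
  obtains x j where "(x, j) \<in> P" "q = v * real x + real j"
  using assms unfolding Psi_def by auto

lemma finite_Psi: "finite (\<Psi> v)"
  unfolding Psi_def using finite_PL by simp

lemma piL_ge: "(x, j) \<in> P \<Longrightarrow> (q - real j) / real x \<le> \<pi> q"
  unfolding piL_def using finite_PL by (intro Max_ge) force+

lemma piL_attained:
  obtains x j where "(x, j) \<in> P" "\<pi> q = (q - real j) / real x"
proof -
  have "\<pi> q \<in> (\<lambda>(x, j). (q - real j) / real x) ` P"
    unfolding piL_def using finite_PL val_a0_in_PL by (intro Max_in) auto
  then show ?thesis using that by auto
qed

lemma strict_mono_piL: "strict_mono \<pi>"
proof
  fix q q' :: real assume "q < q'"
  obtain x j where xj: "(x, j) \<in> P" "\<pi> q = (q - real j) / real x"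
    by (rule piL_attained)
  have "(q - real j) / real x < (q' - real j) / real x"
    using \<open>q < q'\<close> PL_abscissa_bounds(1)[OF xj(1)] by (simp add: divide_strict_right_mono)
  also have "\<dots> \<le> \<pi> q'" using piL_ge[OF xj(1)] .
  finally show "\<pi> q < \<pi> q'" using xj(2) by simp
qed

definition psi_min :: "real \<Rightarrow> real" where
  "psi_min v = Min (\<Psi> v)"

lemma psi_min_le: "q \<in> \<Psi> v \<Longrightarrow> psi_min v \<le> q"
  unfolding psi_min_def using finite_Psi by simp

lemma psi_min_in_Psi: "psi_min v \<in> \<Psi> v"
  unfolding psi_min_def using finite_Psi Psi_memI[OF val_a0_in_PL] by (intro Min_in) auto

lemma piL_psi_min: "\<pi> (psi_min v) = v"
proof (rule antisym)
  obtain x j where xj: "(x, j) \<in> P" "\<pi> (psi_min v) = (psi_min v - real j) / real x"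
    by (rule piL_attained)
  have "psi_min v - real j \<le> v * real x"
    using psi_min_le[OF Psi_memI[OF xj(1)], of v] by simp
  then show "\<pi> (psi_min v) \<le> v"
    using xj(2) PL_abscissa_bounds(1)[OF xj(1)] by (simp add: divide_le_eq)
next
  obtain x j where xj: "(x, j) \<in> P" "psi_min v = v * real x + real j"
    using psi_min_in_Psi by (rule Psi_memE)
  have "v = (psi_min v - real j) / real x"
    using xj(2) PL_abscissa_bounds(1)[OF xj(1)] by simp
  also have "\<dots> \<le> \<pi> (psi_min v)" using piL_ge[OF xj(1)] .
  finally show "v \<le> \<pi> (psi_min v)" .
qed

lemma piL_eq_iff: "\<pi> q = w \<longleftrightarrow> q = psi_min w"
  using strict_mono_eq[OF strict_mono_piL] piL_psi_min by metis

lemma le_piL_Psi: "q \<in> \<Psi> v \<Longrightarrow> v \<le> \<pi> q"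
  using strict_mono_mono[OF strict_mono_piL] psi_min_le piL_psi_min by (metis monoD)

definition pi_step :: "nat \<times> nat \<Rightarrow> real \<Rightarrow> real" where
  "pi_step p y = \<pi> (y * real (fst p) + real (snd p))"

lemma mono_pi_step: "mono (pi_step p)"
  unfolding pi_step_def
  by (intro monoI monoD[OF strict_mono_mono[OF strict_mono_piL]] add_right_mono mult_right_mono) auto

lemma pi_step_inflationary: "p \<in> P \<Longrightarrow> y \<le> pi_step p y"
  unfolding pi_step_def using le_piL_Psi[OF Psi_memI] by (cases p) auto

definition newton_gens :: "(real \<times> real) set" where
  "newton_gens = {(real (l ^ i), y) | i y. i \<le> n \<and> a i \<noteq> 0 \<and> y \<ge> real (val (a i))}"

lemma newton_polygon_eq: "newton_polygon a n l = convex hull newton_gens"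
  unfolding newton_polygon_def newton_gens_def by simp

lemma newton_gens_vertically_closed: "z \<in> newton_gens \<Longrightarrow> 0 \<le> t \<Longrightarrow> z + (0, t) \<in> newton_gens"
  unfolding newton_gens_def by force

lemma PL_in_newton_gens:
  assumes "(x, j) \<in> P"
  shows "(real x, real j) \<in> newton_gens"
proof -
  obtain i where i: "i \<le> n" "x = l ^ i" "coeff (a i) j \<noteq> 0"
    using PL_memD[OF assms] by blast
  then show ?thesis
    unfolding newton_gens_def using val_le[OF i(3)]
    by (intro CollectI exI[of _ i] exI[of _ "real j"]) auto
qed

lemma newton_gens_lowest_point:
  assumes "z \<in> newton_gens"
  obtains x j where "(x, j) \<in> P" "fst z = real x" "real j \<le> snd z"
proof -
  obtain i where i: "i \<le> n" "a i \<noteq> 0" "fst z = real (l ^ i)" "real (val (a i)) \<le> snd z"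
    using assms unfolding newton_gens_def by auto
  then have "(l ^ i, val (a i)) \<in> P"
    unfolding PL_def using coeff_val_nonzero by blast
  then show ?thesis
    using i(3,4) by (rule that)
qed

lemma newton_gen_on_supporting_line:
  assumes "g \<in> newton_gens" and above: "\<forall>z\<in>newton_gens. \<mu> * (fst z - fst p) \<le> snd z - snd p"
    and "snd g - snd p = \<mu> * (fst g - fst p)"
  obtains x j where "(x, j) \<in> P" "g = (real x, real j)"
proof -
  obtain x j where xj: "(x, j) \<in> P" "fst g = real x" "real j \<le> snd g"
    using assms(1) by (rule newton_gens_lowest_point)
  have "\<mu> * (real x - fst p) \<le> real j - snd p"
    using above PL_in_newton_gens[OF xj(1)] by fastforce
  then have "snd g \<le> real j"
    using assms(3) xj(2) by simp
  then have "g = (real x, real j)"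
    using xj(2,3) by (simp add: prod_eq_iff)
  then show ?thesis using that xj(1) by blast
qed

lemma slopes_memE:
  assumes "\<mu> \<in> S"
  obtains F p q where "F face_of convex hull newton_gens" "collinear F" "p \<in> F" "q \<in> F"
    "fst p < fst q" "\<mu> = (snd q - snd p) / (fst q - fst p)"
proof -
  obtain F p q where F: "F face_of convex hull newton_gens" "aff_dim F = 1" "p \<in> F" "q \<in> F"
    "fst p \<noteq> fst q" "\<mu> = (snd q - snd p) / (fst q - fst p)"
    using assms unfolding slopes_def newton_polygon_eq by blast
  have "collinear F"
    using F(2) by (simp add: collinear_aff_dim)
  moreover have "\<mu> = (snd p - snd q) / (fst p - fst q)"
    using F(6) by (metis minus_diff_eq minus_divide_divide)
  moreover consider "fst p < fst q" | "fst q < fst p"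
    using F(5) by linarith
  ultimately show ?thesis
    using that F(1,3,4,6) by metis
qed

lemma slopes_subset_PL_slopes:
  "S \<subseteq> (\<lambda>((x, j), (x', j')). (real j' - real j) / (real x' - real x)) ` (P \<times> P)"
proof
  fix \<mu> assume "\<mu> \<in> S"
  then obtain F p q where F: "F face_of convex hull newton_gens" "collinear F" "p \<in> F" "q \<in> F"
    "fst p < fst q" and \<mu>: "\<mu> = (snd q - snd p) / (fst q - fst p)"
    by (rule slopes_memE)
  have pq: "p \<in> convex hull newton_gens" "q \<in> convex hull newton_gens"
    using F(1,3,4) face_of_imp_subset by blast+
  have above: "\<forall>z\<in>newton_gens. \<mu> * (fst z - fst p) \<le> snd z - snd p"
    using face_of_vertically_closed_hull_supporting[OF newton_gens_vertically_closed F] \<mu>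
    by (simp add: hull_inc)
  have q_line: "snd q - snd p = \<mu> * (fst q - fst p)"
    using F(5) \<mu> by simp
  then have above_q: "\<forall>z\<in>newton_gens. \<mu> * (fst z - fst q) \<le> snd z - snd q"
    using above by (auto simp: algebra_simps)
  obtain g where g: "g \<in> newton_gens" "snd g - snd p = \<mu> * (fst g - fst p)" "fst g \<le> fst p"
    using convex_hull_point_on_supporting_line(1)[OF pq(1) above] by blast
  obtain g' where g': "g' \<in> newton_gens" "snd g' - snd q = \<mu> * (fst g' - fst q)" "fst q \<le> fst g'"
    using convex_hull_point_on_supporting_line(2)[OF pq(2) above_q] by blast
  have g'_line: "snd g' - snd p = \<mu> * (fst g' - fst p)"
    using g'(2) q_line by (simp add: algebra_simps)
  obtain x j where xj: "(x, j) \<in> P" "g = (real x, real j)"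
    using g(1) above g(2) by (rule newton_gen_on_supporting_line)
  obtain x' j' where xj': "(x', j') \<in> P" "g' = (real x', real j')"
    using g'(1) above g'_line by (rule newton_gen_on_supporting_line)
  have "fst g < fst g'"
    using g(3) g'(3) F(5) by simp
  moreover have "snd g' - snd g = \<mu> * (fst g' - fst g)"
    using g(2) g'_line by (simp add: algebra_simps)
  ultimately have "\<mu> = (real j' - real j) / (real x' - real x)"
    using xj(2) xj'(2) by simp
  then show "\<mu> \<in> (\<lambda>((x, j), (x', j')). (real j' - real j) / (real x' - real x)) ` (P \<times> P)"
    using xj(1) xj'(1) by force
qed

lemma finite_slopes: "finite S"
  by (rule finite_subset[OF slopes_subset_PL_slopes]) (simp add: finite_PL)

lemma supporting_slope_in_slopes:
  assumes XJ: "(X, J) \<in> P" and x1: "(x1, j1) \<in> P" "X < x1"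
    and supp: "\<forall>(x, j)\<in>P. \<mu> * (real x - real X) \<le> real j - real J"
    and \<mu>: "\<mu> = (real j1 - real J) / (real x1 - real X)"
  shows "\<mu> \<in> S"
proof -
  define c :: "real \<times> real" where "c = (\<mu>, -1)"
  define b where "b = \<mu> * real X - real J"
  have "c \<bullet> z \<le> b" if z: "z \<in> newton_gens" for z
  proof -
    obtain x j where "(x, j) \<in> P" "fst z = real x" "real j \<le> snd z"
      using z by (rule newton_gens_lowest_point)
    moreover have "\<mu> * (real x - real X) \<le> real j - real J"
      using supp calculation(1) by fastforce
    ultimately show ?thesis
      unfolding c_def b_def by (simp add: inner_prod_def algebra_simps)
  qed
  then have "convex hull newton_gens \<subseteq> {z. c \<bullet> z \<le> b}"
    by (intro hull_minimal convex_halfspace_le) auto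
  then have face: "convex hull newton_gens \<inter> {z. c \<bullet> z = b} face_of convex hull newton_gens"
    by (intro face_of_Int_supporting_hyperplane_le) auto
  let ?F = "convex hull newton_gens \<inter> {z. c \<bullet> z = b}"
  have p1: "(real X, real J) \<in> ?F"
    using PL_in_newton_gens[OF XJ] by (simp add: hull_inc c_def b_def inner_prod_def)
  have "real j1 - real J = \<mu> * (real x1 - real X)"
    using \<mu> x1(2) by simp
  then have p2: "(real x1, real j1) \<in> ?F"
    using PL_in_newton_gens[OF x1(1)] by (simp add: hull_inc c_def b_def inner_prod_def algebra_simps)
  have "aff_dim ?F \<le> aff_dim {z. c \<bullet> z = b}"
    by (rule aff_dim_subset) auto
  also have "\<dots> = 1"
    by (subst aff_dim_hyperplane) (auto simp: c_def zero_prod_def)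
  finally have "aff_dim ?F \<le> 1" .
  moreover have "aff_dim {(real X, real J), (real x1, real j1)} \<le> aff_dim ?F"
    using p1 p2 by (intro aff_dim_subset) auto
  moreover have "aff_dim {(real X, real J), (real x1, real j1)} = 1"
    using x1(2) by simp
  ultimately have "aff_dim ?F = 1" by simp
  then show ?thesis
    unfolding slopes_def newton_polygon_eq using face p1 p2 \<mu> x1(2)
    by (intro CollectI exI[of _ ?F] exI[of _ "(real X, real J)"] exI[of _ "(real x1, real j1)"]) auto
qed

abbreviation V where "V \<equiv> Vset a n l"

lemma neg_slope_in_Vset: "\<mu> \<in> S \<Longrightarrow> - \<mu> \<in> V"
  unfolding Vset_def by (intro UN_I[of 0]) auto

lemma Vset_induct [consumes 1, case_names slope step]:
  assumes "v \<in> V"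
    and slope: "\<And>\<mu>. \<mu> \<in> S \<Longrightarrow> Q (- \<mu>)"
    and step: "\<And>v q. v \<in> V \<Longrightarrow> Q v \<Longrightarrow> q \<in> \<Psi> v \<Longrightarrow> Q (\<pi> q)"
  shows "Q v"
proof -
  have "\<forall>v\<in>Vseq a n l i. Q v" for i
  proof (induction i)
    case (Suc i)
    show ?case
    proof
      fix w assume "w \<in> Vseq a n l (Suc i)"
      then obtain v q where "v \<in> Vseq a n l i" "q \<in> \<Psi> v" "w = \<pi> q"
        by auto
      moreover from this(1) have "v \<in> V"
        unfolding Vset_def by blast
      ultimately show "Q w" using step Suc.IH by blast
    qed
  qed (auto intro: slope)
  then show ?thesis using assms(1) unfolding Vset_def by blast
qed

lemma Vset_subset_foldr_closure: "V \<subseteq> foldr_closure pi_step P (uminus ` S)"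
proof
  fix v assume "v \<in> V"
  then show "v \<in> foldr_closure pi_step P (uminus ` S)"
  proof (induction rule: Vset_induct)
    case (slope \<mu>)
    then show ?case
      unfolding foldr_closure_def by (intro CollectI exI[of _ "[]"]) auto
  next
    case (step v q)
    then obtain ws s where ws: "v = foldr pi_step ws s" "set ws \<subseteq> P" "s \<in> uminus ` S"
      unfolding foldr_closure_def by blast
    obtain x j where "(x, j) \<in> P" "q = v * real x + real j"
      using step.hyps(2) by (rule Psi_memE)
    then have "\<pi> q = foldr pi_step ((x, j) # ws) s"
      using ws(1) by (simp add: pi_step_def)
    then show ?case
      unfolding foldr_closure_def using \<open>(x, j) \<in> P\<close> ws(2,3)
      by (intro CollectI exI[of _ "(x, j) # ws"] exI[of _ s]) auto
  qed
qed

lemma Vset_has_least: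
  assumes "W \<subseteq> V" "W \<noteq> {}"
  shows "\<exists>w\<in>W. \<forall>w'\<in>W. w \<le> w'"
  using foldr_closure_has_least[OF finite_PL _ _ _ _ assms(2), of "uminus ` S" pi_step]
    finite_slopes mono_pi_step pi_step_inflationary assms(1) Vset_subset_foldr_closure
  by blast

lemma Vset_lower_bound: "v \<in> V \<Longrightarrow> - Max S \<le> v"
proof (induction rule: Vset_induct)
  case (slope \<mu>)
  then show ?case using finite_slopes by simp
next
  case (step v q)
  then show ?case using le_piL_Psi[OF step.hyps(2)] by simp
qed

lemma rightmost_psi_min:
  obtains I J where "(l ^ I, J) \<in> P" "psi_min w = w * real (l ^ I) + real J"
    "\<And>x j. (x, j) \<in> P \<Longrightarrow> l ^ I < x \<Longrightarrow> psi_min w < w * real x + real j"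
proof -
  define M where "M = {p \<in> P. psi_min w = w * real (fst p) + real (snd p)}"
  have "finite M" unfolding M_def using finite_PL by simp
  moreover obtain X0 J0 where "(X0, J0) \<in> P" "psi_min w = w * real X0 + real J0"
    using psi_min_in_Psi by (rule Psi_memE)
  then have "M \<noteq> {}"
    unfolding M_def by force
  ultimately have "Max (fst ` M) \<in> fst ` M" by simp
  then obtain X J where XJ: "(X, J) \<in> P" "psi_min w = w * real X + real J" "X = Max (fst ` M)"
    unfolding M_def by force
  obtain I where "X = l ^ I"
    using PL_memD[OF XJ(1)] by blast
  moreover have "psi_min w < w * real x + real j" if "(x, j) \<in> P" "X < x" for x j
  proof -
    have "(x, j) \<notin> M"
    proof
      assume "(x, j) \<in> M"
      then have "x \<le> X"
        unfolding XJ(3) using \<open>finite M\<close> by (intro Max_ge) force+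
      then show False using that(2) by simp
    qed
    then show ?thesis
      using psi_min_le[OF Psi_memI[OF that(1)], of w] that(1) unfolding M_def by force
  qed
  ultimately show ?thesis using that XJ(1,2) by blast
qed

text \<open>The slope \<open>\<mu>\<close> obtained is that of the edge of the Newton polygon leaving \<open>(X, J)\<close>
  to the right.\<close>

lemma right_edge_slope:
  assumes XJ: "(X, J) \<in> P" and xj: "(x, j) \<in> P" "X < x"
    and min: "\<forall>(x', j')\<in>P. w * real X + real J \<le> w * real x' + real j'"
    and right: "\<And>x' j'. (x', j') \<in> P \<Longrightarrow> X < x' \<Longrightarrow> w * real X + real J < w * real x' + real j'"
  obtains \<mu> where "\<mu> \<in> S" "- w < \<mu>" "\<mu> * (real x - real X) \<le> real j - real J"
proof -
  define sl where "sl p = (real (snd p) - real J) / (real (fst p) - real X)" for p :: "nat \<times> nat"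
  define Q where "Q = {p \<in> P. X < fst p}"
  define \<mu> where "\<mu> = Min (sl ` Q)"
  have "finite Q" "(x, j) \<in> Q"
    unfolding Q_def using finite_PL xj by auto
  then have \<mu>_le: "\<mu> \<le> sl p" if "p \<in> Q" for p
    unfolding \<mu>_def using that by simp
  obtain x1 j1 where x1: "(x1, j1) \<in> P" "X < x1" "\<mu> = sl (x1, j1)"
    using Min_in[of "sl ` Q"] \<open>finite Q\<close> \<open>(x, j) \<in> Q\<close> unfolding \<mu>_def Q_def by fastforce
  have "- w < \<mu>"
    using right[OF x1(1,2)] x1(2,3) by (simp add: sl_def pos_less_divide_eq algebra_simps)
  have supp: "\<forall>(x', j')\<in>P. \<mu> * (real x' - real X) \<le> real j' - real J"
  proof (intro ballI, clarify)
    fix x' j' assume p: "(x', j') \<in> P"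
    have mn: "w * real X + real J \<le> w * real x' + real j'" using min p by blast
    consider "X < x'" | "x' = X" | "x' < X" by linarith
    then show "\<mu> * (real x' - real X) \<le> real j' - real J"
    proof cases
      case 1
      then show ?thesis using \<mu>_le[of "(x', j')"] p by (simp add: Q_def sl_def le_divide_eq)
    next
      case 3
      then have "- \<mu> * (real X - real x') < w * (real X - real x')"
        using \<open>- w < \<mu>\<close> by (intro mult_strict_right_mono) auto
      then show ?thesis using mn by (simp add: algebra_simps)
    qed (use mn in simp)
  qed
  have "\<mu> \<in> S"
    using supporting_slope_in_slopes[OF XJ x1(1,2) supp] x1(3) by (simp add: sl_def)
  moreover have "\<mu> * (real x - real X) \<le> real j - real J"
    using supp xj(1) by blast
  ultimately show ?thesis using that \<open>- w < \<mu>\<close> by blast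
qed

end

section \<open>Heights and the constant \<open>\<tau>\<close>\<close>

lemma Ints_scaled_mono:
  fixes d l :: nat
  assumes "real d * real l ^ h * v \<in> \<int>" "h \<le> h'"
  shows "real d * real l ^ h' * v \<in> \<int>"
proof -
  have "real l ^ h' = real l ^ (h' - h) * real l ^ h"
    using assms(2) by (metis le_add_diff_inverse2 power_add)
  then have "real d * real l ^ h' * v = real l ^ (h' - h) * (real d * real l ^ h * v)"
    by (simp only: mult_ac)
  also have "\<dots> \<in> \<int>"
    by (rule Ints_mult[OF _ assms(1)]) simp
  finally show ?thesis .
qed

text \<open>No relation between \<open>h\<close> and \<open>I\<close> is needed: \<open>h - I\<close> is truncated subtraction.\<close>

lemma Ints_scaled_step:
  fixes d l :: nat
  assumes "real d * real l ^ h * v \<in> \<int>" "l \<noteq> 0"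
  shows "real d * real l ^ ((h - I) + i) * ((v * real l ^ I + real J - real j) / real l ^ i) \<in> \<int>"
proof -
  have "real d * real l ^ ((h - I) + i) * ((v * real l ^ I + real J - real j) / real l ^ i)
      = real d * real l ^ ((h - I) + I) * v + real d * real l ^ (h - I) * (real J - real j)"
    using assms(2) by (simp add: power_add field_simps)
  moreover have "real d * real l ^ ((h - I) + I) * v \<in> \<int>"
    using Ints_scaled_mono[OF assms(1)] by simp
  ultimately show ?thesis by simp
qed

locale mahler_operator_denom = mahler_operator a n l for a :: "nat \<Rightarrow> 'a::field poly" and n l +
  fixes d :: nat
  assumes d_pos: "1 \<le> d" and slopes_denom: "\<forall>\<mu>\<in>S. real d * \<mu> \<in> \<int>"
begin

lemma Vset_scaled_Ints: "v \<in> V \<Longrightarrow> \<exists>h. real d * real l ^ h * v \<in> \<int>"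
proof (induction rule: Vset_induct)
  case (slope \<mu>)
  then have "real d * real l ^ 0 * - \<mu> \<in> \<int>"
    using slopes_denom by simp
  then show ?case by blast
next
  case (step v q)
  then obtain h where h: "real d * real l ^ h * v \<in> \<int>" by blast
  obtain x j where xj: "(x, j) \<in> P" "q = v * real x + real j"
    using step.hyps(2) by (rule Psi_memE)
  obtain x' j' where xj': "(x', j') \<in> P" "\<pi> q = (q - real j') / real x'"
    by (rule piL_attained)
  obtain I i where "x = l ^ I" "x' = l ^ i"
    using PL_memD[OF xj(1)] PL_memD[OF xj'(1)] by blast
  then have "\<pi> q = (v * real l ^ I + real j - real j') / real l ^ i"
    using xj(2) xj'(2) by simp
  then show ?case
    using Ints_scaled_step[OF h] l_ge_2 by (metis not_numeral_le_zero)
qed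

definition height :: "real \<Rightarrow> nat" where
  "height v = (LEAST h. real d * real l ^ h * v \<in> \<int>)"

lemma height_Ints: "v \<in> V \<Longrightarrow> real d * real l ^ height v * v \<in> \<int>"
  unfolding height_def using Vset_scaled_Ints by (metis LeastI)

lemma height_le: "real d * real l ^ h * v \<in> \<int> \<Longrightarrow> height v \<le> h"
  unfolding height_def by (rule Least_le)

lemma height_piL_step:
  assumes "w \<in> V"
  shows "height ((w * real l ^ I + real J - real j) / real l ^ i) \<le> (height w - I) + i"
  using Ints_scaled_step[OF height_Ints[OF assms]] l_ge_2 by (intro height_le) simp

lemma gap_ge_height:
  assumes "v \<in> V" "w \<in> V" "v < w"
  shows "1 / (real d * real l ^ max (height v) (height w)) \<le> w - v"
proof -
  define D where "D = real d * real l ^ max (height v) (height w)"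
  have "D > 0"
    unfolding D_def using d_pos l_ge_2 by simp
  have "D * v \<in> \<int>" "D * w \<in> \<int>"
    unfolding D_def using Ints_scaled_mono height_Ints assms(1,2) by (metis max.cobounded1 max.cobounded2)+
  then obtain k :: int where "D * w - D * v = of_int k"
    by (metis Ints_cases Ints_diff)
  moreover have "D * w - D * v > 0"
    using \<open>D > 0\<close> assms(3) by (simp add: algebra_simps)
  ultimately have "1 \<le> D * (w - v)"
    by (simp add: algebra_simps)
  then show ?thesis
    using \<open>D > 0\<close> unfolding D_def[symmetric] by (simp add: divide_le_eq mult.commute)
qed

abbreviation \<tau> where "\<tau> \<equiv> tau a n l d"

lemma eps_neg_slope:
  assumes "\<mu> \<in> S" "w \<in> V" "- \<mu> < w"
  obtains z where "z \<in> V" "- \<mu> < z" "z \<le> w" "eps a n l (- \<mu>) = ereal (z + \<mu>)"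
proof -
  obtain z where z: "z \<in> {w \<in> V. - \<mu> < w}" "\<forall>w'\<in>{w \<in> V. - \<mu> < w}. z \<le> w'"
    using Vset_has_least[of "{w \<in> V. - \<mu> < w}"] assms(2,3) by blast
  then have "(LEAST w. w \<in> V \<and> - \<mu> < w) = z"
    by (intro Least_equality) auto
  then have "eps a n l (- \<mu>) = ereal (z + \<mu>)"
    unfolding eps_def using assms(2,3) by auto
  then show ?thesis
    using that z assms(2,3) by auto
qed

lemma eps_neg_slope_pos:
  assumes "\<mu> \<in> S"
  shows "0 < eps a n l (- \<mu>)"
proof (cases "\<exists>w\<in>V. - \<mu> < w")
  case True
  then obtain w where "w \<in> V" "- \<mu> < w" by blast
  with assms obtain z where "- \<mu> < z" "eps a n l (- \<mu>) = ereal (z + \<mu>)"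
    by (rule eps_neg_slope)
  then show ?thesis by simp
qed (simp add: eps_def)

lemma eps_neg_slope_le: "\<mu> \<in> S \<Longrightarrow> w \<in> V \<Longrightarrow> - \<mu> < w \<Longrightarrow> eps a n l (- \<mu>) \<le> ereal (w + \<mu>)"
  by (auto elim: eps_neg_slope)

lemma ereal_tau:
  "ereal \<tau> = Min ({ereal (1 / (real d * real l ^ n))} \<union> (\<lambda>\<mu>. eps a n l (- \<mu>)) ` S)"
    (is "_ = Min ?M")
proof -
  have "finite ?M" using finite_slopes by simp
  then have "Min ?M \<le> ereal (1 / (real d * real l ^ n))" "0 < Min ?M"
    using eps_neg_slope_pos d_pos l_ge_2 by auto
  then show ?thesis
    unfolding tau_def by (cases "Min ?M") auto
qed

lemma tau_pos: "0 < \<tau>"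
proof -
  have "0 < ereal \<tau>"
    unfolding ereal_tau using finite_slopes eps_neg_slope_pos d_pos l_ge_2 by (simp add: Min_gr_iff)
  then show ?thesis by simp
qed

lemma tau_le: "\<tau> \<le> 1 / (real d * real l ^ n)"
proof -
  have "ereal \<tau> \<le> ereal (1 / (real d * real l ^ n))"
    unfolding ereal_tau using finite_slopes by (intro Min_le) auto
  then show ?thesis by simp
qed

lemma tau_gap: "\<mu> \<in> S \<Longrightarrow> w \<in> V \<Longrightarrow> - \<mu> < w \<Longrightarrow> - \<mu> + \<tau> \<le> w"
proof -
  assume "\<mu> \<in> S" "w \<in> V" "- \<mu> < w"
  then have "ereal \<tau> \<le> eps a n l (- \<mu>)"
    unfolding ereal_tau using finite_slopes by (intro Min_le) auto
  also have "\<dots> \<le> ereal (w + \<mu>)"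
    using eps_neg_slope_le \<open>\<mu> \<in> S\<close> \<open>w \<in> V\<close> \<open>- \<mu> < w\<close> .
  finally show ?thesis by simp
qed

section \<open>A potential bounding the stage at which an element enters \<open>\<R>\<close>\<close>

lemma gap_same_column:
  assumes "(x, j) \<in> P" "(x, J) \<in> P" "w * real x + real J = v * real x + real j" "v < w"
  shows "1 / (real d * real l ^ n) \<le> w - v"
proof -
  have "(w - v) * real x = real j - real J"
    using assms(3) by (simp add: algebra_simps)
  moreover have "0 < (w - v) * real x"
    using assms(4) PL_abscissa_bounds(1)[OF assms(1)] by simp
  ultimately have "Suc J \<le> j"
    by simp
  then have "1 \<le> (w - v) * real x"
    using \<open>(w - v) * real x = real j - real J\<close> by (metis of_nat_Suc of_nat_le_iff add.commute le_diff_eq)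
  also have "\<dots> \<le> (w - v) * (real d * real l ^ n)"
  proof (rule mult_left_mono)
    have "real x \<le> real l ^ n"
      using PL_abscissa_bounds(2)[OF assms(1)] by (metis of_nat_le_iff of_nat_power)
    also have "\<dots> \<le> real d * real l ^ n"
      using d_pos by (intro mult_le_cancel_right1[THEN iffD2]) auto
    finally show "real x \<le> real d * real l ^ n" .
  qed (use assms(4) in simp)
  finally show ?thesis
    using d_pos l_ge_2 by (simp add: divide_le_eq mult.commute)
qed

lemma gap_right_column:
  assumes "v \<in> V" "w \<in> V" "v < w"
    and XJ: "(X, J) \<in> P" "psi_min w = w * real X + real J"
    and right: "\<And>x' j'. (x', j') \<in> P \<Longrightarrow> X < x' \<Longrightarrow> psi_min w < w * real x' + real j'"
    and xj: "(x, j) \<in> P" "2 * X \<le> x" "psi_min w = v * real x + real j"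
  shows "\<tau> \<le> w - v"
proof -
  have "X < x"
    using xj(2) PL_abscissa_bounds(1)[OF XJ(1)] by linarith
  moreover have "\<forall>(x', j')\<in>P. w * real X + real J \<le> w * real x' + real j'"
    using psi_min_le[OF Psi_memI[where v = w]] XJ(2) by auto
  ultimately obtain \<mu> where \<mu>: "\<mu> \<in> S" "- w < \<mu>" "\<mu> * (real x - real X) \<le> real j - real J"
    using right_edge_slope[OF XJ(1) xj(1)] right XJ(2) by metis
  show ?thesis
  proof (cases "v \<le> - \<mu>")
    case True
    then show ?thesis using tau_gap[OF \<mu>(1) assms(2)] \<mu>(2) by simp
  next
    case False
    then have "- \<mu> + \<tau> \<le> v"
      using tau_gap[OF \<mu>(1) assms(1)] by simp
    then have "(- \<mu> + \<tau>) * (real x - real X) \<le> v * (real x - real X)"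
      using \<open>X < x\<close> by (intro mult_right_mono) auto
    moreover have "real X * (w - v) = v * (real x - real X) + (real j - real J)"
      using XJ(2) xj(3) by (simp add: algebra_simps)
    ultimately have "\<tau> * (real x - real X) \<le> real X * (w - v)"
      using \<mu>(3) by (simp add: algebra_simps)
    moreover have "\<tau> * real X \<le> \<tau> * (real x - real X)"
      using xj(2) tau_pos by (intro mult_left_mono) auto
    ultimately have "real X * \<tau> \<le> real X * (w - v)"
      by (simp add: mult.commute)
    then show ?thesis
      using PL_abscissa_bounds(1)[OF XJ(1)] by (simp add: mult_le_cancel_left_pos)
  qed
qed

lemma height_Psi_preimage:
  assumes "w \<in> V" "(l ^ I, J) \<in> P" "psi_min w = w * real (l ^ I) + real J"
    and "(l ^ i, j) \<in> P" "psi_min w = v * real (l ^ i) + real j"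
  shows "height v \<le> (height w - I) + i"
proof -
  have "v = (w * real l ^ I + real J - real j) / real l ^ i"
    using assms(3,5) l_ge_2 by (simp add: field_simps)
  then show ?thesis
    using height_piL_step[OF assms(1)] by simp
qed

lemma small_gap_height_gt:
  assumes "v \<in> V" "w \<in> V" "v < w" "w - v < \<tau>" "height w \<le> height v"
  shows "n < height v"
proof (rule ccontr)
  assume "\<not> ?thesis"
  then have "1 / (real d * real l ^ n) \<le> 1 / (real d * real l ^ height v)"
    using d_pos l_ge_2 by (intro divide_left_mono mult_left_mono power_increasing) auto
  then show False
    using gap_ge_height[OF assms(1-3)] assms(4,5) tau_le by (simp add: max_def)
qed

lemma height_less_if_small_gap:
  assumes "v \<in> V" "w \<in> V" "v < w" "w - v < \<tau>"
    and xj: "(x, j) \<in> P" "psi_min w = v * real x + real j"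
  shows "height v < height w"
proof (rule ccontr)
  assume "\<not> ?thesis"
  then have hw: "height w \<le> height v" by simp
  then have "n < height v"
    using small_gap_height_gt assms(1-4) by blast
  obtain i where i: "i \<le> n" "x = l ^ i"
    using PL_memD[OF xj(1)] by blast
  obtain I J where IJ: "(l ^ I, J) \<in> P" "psi_min w = w * real (l ^ I) + real J"
    and right: "\<And>x j. (x, j) \<in> P \<Longrightarrow> l ^ I < x \<Longrightarrow> psi_min w < w * real x + real j"
    by (rule rightmost_psi_min[of w]) blast
  have "height v \<le> (height w - I) + i"
    using height_Psi_preimage[OF assms(2) IJ] xj i(2) by simp
  then have "I \<le> i"
    using hw \<open>n < height v\<close> i(1) by linarith
  then consider "i = I" | "I < i" by linarith
  then show False
  proof cases
    case 1
    then have "(x, J) \<in> P" "w * real x + real J = v * real x + real j"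
      using IJ xj(2) i(2) by simp_all
    then have "1 / (real d * real l ^ n) \<le> w - v"
      using gap_same_column[OF xj(1)] assms(3) by blast
    then show False
      using assms(4) tau_le by simp
  next
    case 2
    have "2 * l ^ I \<le> l ^ Suc I"
      using l_ge_2 by simp
    also have "\<dots> \<le> x"
      unfolding i(2) using 2 l_ge_2 by (intro power_increasing) auto
    finally show False
      using gap_right_column[OF assms(1-3) IJ(1,2) right xj(1) _ xj(2)] assms(4) by simp
  qed
qed

definition potential :: "real \<Rightarrow> real" where
  "potential v = real (n + 1) * v / \<tau> + real (height v)"

lemma potential_step:
  assumes "v \<in> V" "w \<in> V" "v < w" "q \<in> \<Psi> v" "\<pi> q = w"
  shows "potential v + 1 \<le> potential w"
proof -
  obtain x j where xj: "(x, j) \<in> P" "psi_min w = v * real x + real j"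
    using assms(4) piL_eq_iff assms(5) by (metis Psi_memE)
  show ?thesis
  proof (cases "w - v < \<tau>")
    case True
    then have "height v < height w"
      using height_less_if_small_gap[OF assms(1-3) _ xj] by simp
    moreover have "0 \<le> real (n + 1) * (w - v) / \<tau>"
      using assms(3) tau_pos by simp
    ultimately show ?thesis
      unfolding potential_def by (simp add: diff_divide_distrib algebra_simps)
  next
    case False
    then have big: "real (n + 1) \<le> real (n + 1) * (w - v) / \<tau>"
      using tau_pos by (simp add: le_divide_eq)
    obtain i where i: "i \<le> n" "x = l ^ i"
      using PL_memD[OF xj(1)] by blast
    obtain I J where IJ: "(l ^ I, J) \<in> P" "psi_min w = w * real (l ^ I) + real J"
      and "\<And>x j. (x, j) \<in> P \<Longrightarrow> l ^ I < x \<Longrightarrow> psi_min w < w * real x + real j"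
      by (rule rightmost_psi_min[of w]) blast
    have "height v \<le> (height w - I) + i"
      using height_Psi_preimage[OF assms(2) IJ] xj i(2) by simp
    then have "height v \<le> height w + n"
      using i(1) by linarith
    then show ?thesis
      using big unfolding potential_def by (simp add: diff_divide_distrib algebra_simps)
  qed
qed

lemma Rseq_subset_Vset: "E \<subseteq> V \<Longrightarrow> Rseq a n l E i \<subseteq> V"
  by (cases i) (auto intro: neg_slope_in_Vset)

lemma Rseq_mono:
  assumes "E \<subseteq> V"
  shows "mono (Rseq a n l E)"
proof (rule incseq_SucI)
  fix i
  show "Rseq a n l E i \<subseteq> Rseq a n l E (Suc i)"
  proof
    fix v assume "v \<in> Rseq a n l E i"
    moreover have "v \<in> \<pi> ` \<Psi> v"
      using psi_min_in_Psi piL_psi_min by (metis image_eqI)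
    ultimately show "v \<in> Rseq a n l E (Suc i)"
      using Rseq_subset_Vset[OF assms] by auto
  qed
qed

lemma potential_add_stage_le_initial:
  assumes "E \<subseteq> V" "v \<in> Rseq a n l E k" "\<forall>k'<k. v \<notin> Rseq a n l E k'"
  shows "\<exists>w\<in>Rseq a n l E 0. potential v + real k \<le> potential w"
  using assms(2,3)
proof (induction k arbitrary: v)
  case 0
  then show ?case by force
next
  case (Suc k)
  then have "v \<in> V" "v \<notin> Rseq a n l E k"
    by auto
  obtain q where q: "q \<in> \<Psi> v" "\<pi> q \<in> Rseq a n l E k"
    using Suc.prems(1) by auto
  have new: "\<forall>k'<k. \<pi> q \<notin> Rseq a n l E k'"
  proof (intro allI impI notI)
    fix k' assume "k' < k" "\<pi> q \<in> Rseq a n l E k'"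
    then have "v \<in> Rseq a n l E (Suc k')"
      using q(1) \<open>v \<in> V\<close> by (simp only: Rseq.simps) blast
    moreover have "Suc k' < Suc k"
      using \<open>k' < k\<close> by simp
    ultimately show False
      using Suc.prems(2) by blast
  qed
  have "v < \<pi> q"
    using le_piL_Psi[OF q(1)] q(2) \<open>v \<notin> Rseq a n l E k\<close> by (metis order.not_eq_order_implies_strict)
  then have "potential v + 1 \<le> potential (\<pi> q)"
    using potential_step \<open>v \<in> V\<close> Rseq_subset_Vset[OF assms(1)] q by blast
  moreover obtain w where "w \<in> Rseq a n l E 0" "potential (\<pi> q) + real k \<le> potential w"
    using Suc.IH[OF q(2) new] by blast
  ultimately show ?case by force
qed

lemma potential_lower_bound:
  assumes "v \<in> V"
  shows "real (n + 1) * (- Max S) / \<tau> \<le> potential v"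
proof -
  have "real (n + 1) * (- Max S) / \<tau> \<le> real (n + 1) * v / \<tau>"
    using Vset_lower_bound[OF assms] tau_pos by (intro divide_right_mono mult_left_mono) auto
  then show ?thesis
    unfolding potential_def by simp
qed

lemma potential_initial_bound:
  assumes "v \<in> Rseq a n l E 0" "\<forall>e\<in>E. real d * real l ^ H * e \<in> \<int>"
    and "\<forall>v\<in>E \<union> uminus ` S. v \<le> N"
  shows "potential v \<le> real (n + 1) * N / \<tau> + real H"
proof -
  have "height v \<le> H"
  proof (cases "v \<in> E")
    case False
    then obtain \<mu> where "\<mu> \<in> S" "v = - \<mu>"
      using assms(1) by auto
    then have "real d * real l ^ 0 * v \<in> \<int>"
      using slopes_denom by simp
    then show ?thesis
      using Ints_scaled_mono height_le by blast
  qed (use assms(2) height_le in blast)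
  moreover have "v \<le> N"
    using assms(1,3) by auto
  then have "real (n + 1) * v / \<tau> \<le> real (n + 1) * N / \<tau>"
    using tau_pos by (simp add: divide_right_mono)
  ultimately show ?thesis
    unfolding potential_def by simp
qed

lemma Rseq_stable:
  assumes "E \<subseteq> V" "\<forall>e\<in>E. real d * real l ^ H * e \<in> \<int>" "\<forall>v\<in>E \<union> uminus ` S. v \<le> N"
    and i: "\<lfloor>real (n + 1) * (N + Max S) / \<tau>\<rfloor> + int H \<le> int i"
  shows "Rseq a n l E i = (\<Union>j. Rseq a n l E j)"
proof (rule ccontr)
  assume "\<not> ?thesis"
  then obtain v j where "v \<in> Rseq a n l E j" "v \<notin> Rseq a n l E i"
    by blast
  define k where "k = (LEAST k. v \<in> Rseq a n l E k)"
  have "v \<in> Rseq a n l E k" "\<forall>k'<k. v \<notin> Rseq a n l E k'"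
    unfolding k_def using \<open>v \<in> Rseq a n l E j\<close> by (auto intro: LeastI dest: not_less_Least)
  moreover have "i < k"
    using monoD[OF Rseq_mono[OF assms(1)], of k i] calculation(1) \<open>v \<notin> Rseq a n l E i\<close> by force
  ultimately obtain w where "w \<in> Rseq a n l E 0" "potential v + real k \<le> potential w"
    using potential_add_stage_le_initial[OF assms(1)] by blast
  moreover have "potential w \<le> real (n + 1) * N / \<tau> + real H"
    using potential_initial_bound[OF \<open>w \<in> Rseq a n l E 0\<close> assms(2,3)] .
  moreover have "real (n + 1) * (- Max S) / \<tau> \<le> potential v"
    using potential_lower_bound Rseq_subset_Vset[OF assms(1)] \<open>v \<in> Rseq a n l E k\<close> by blast
  ultimately have "real k \<le> real (n + 1) * N / \<tau> - real (n + 1) * (- Max S) / \<tau> + real H"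
    by linarith
  also have "\<dots> = real (n + 1) * (N + Max S) / \<tau> + real H"
    by (simp add: diff_divide_distrib[symmetric] algebra_simps)
  finally have "real k \<le> real (n + 1) * (N + Max S) / \<tau> + real H" .
  then have "int k - int H \<le> \<lfloor>real (n + 1) * (N + Max S) / \<tau>\<rfloor>"
    by (simp add: le_floor_iff)
  then show False
    using i \<open>i < k\<close> by linarith
qed

end

theorem mainTheorem19:
  fixes a :: "nat \<Rightarrow> 'a::field poly" and n l d H :: nat and N :: real and E :: "real set"
  assumes "n \<ge> 1" and "l \<ge> 2" and "a 0 \<noteq> 0" and "a n \<noteq> 0"
    and "d \<ge> 1" and "\<forall>\<mu>\<in>slopes a n l. real d * \<mu> \<in> \<int>"
    and "finite E" and "E \<subseteq> Vset a n l"
    and "\<forall>e\<in>E. real d * real l ^ H * e \<in> \<int>"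
    and "N \<in> \<rat>" and "N \<ge> 0" and "\<forall>v\<in>E \<union> uminus ` slopes a n l. v \<le> N"
  shows "\<forall>i::nat. int i \<ge> \<lfloor>real (n + 1) * (N + Max (slopes a n l)) / tau a n l d\<rfloor> + int H
           \<longrightarrow> Rseq a n l E i = (\<Union>j. Rseq a n l E j)"
proof -
  interpret mahler_operator_denom a n l d
    using assms(2,3,5,6) by unfold_locales auto
  show ?thesis
    using Rseq_stable[OF assms(8,9,12)] by blast
qed

end
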